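(* Let $(T,X)$ be a flow ($T$ a Hausdorff topological group, $X$ a Hausdorff uniform space) and let $S$ be a thick normal subsemigroup of $T$. Let $x\in X$ be such that $\overline{S^{-1}x}$ is compact and the subflow $(T,Tx)$ is uniformly Lyapunov $S$-stable. Then $\overline{Tx}$ is compact, $(T,\overline{Tx})$ is minimal, and $(T,\overline{Tx})$ is an a.p. flow.
   Context: $\mathscr U_X$ is a compatible symmetric uniformity of $X$. $S\subseteq T$ is (right) thick if for every compact $K\subseteq T$ there is $t$ with $Kt\subseteq S$; normal means $St=tS$ for all $t\in T$; $S^{-1}=\{s^{-1}:s\in S\}$. $(T,Tx)$ is uniformly Lyapunov $S$-stable if for every $\varepsilon\in\mathscr U_X$ there is $\delta\in\mathscr U_X$ such that $(sy,sz)\in\varepsilon$ for all $s\in S$ and all $y,z\in Tx$ with $(y,z)\in\delta$. $A\subseteq T$ is syndetic if there is compact $K$ with $Kt\cap A\neq\emptyset$ for all $t$. A flow $(T,Z)$ is an a.p. flow if for every $\alpha$ in its uniformity there is a syndetic $A\subseteq T$ with $Az\subseteq\alpha[z]$ for all $z\in Z$. *)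

theory Defs
  imports "HOL-Analysis.Analysis"
begin

text \<open>The phase group T is a Hausdorff topological group, written
additively (class topological_group_add, which is NOT assumed commutative):
the group product s t is written s + t, the inverse of s is - s, the unit is 0.
The phase space X is a Hausdorff uniform space (class uniform_space + t2_space);
an entourage is a set E of pairs with eventually (\<lambda>p. p \<in> E) uniformity.\<close>

definition entourage :: "('x::uniform_space \<times> 'x) set \<Rightarrow> bool" where
  "entourage E \<longleftrightarrow> eventually (\<lambda>p. p \<in> E) uniformity"

definition is_flow :: "('t::topological_group_add \<Rightarrow> 'x::topological_space \<Rightarrow> 'x) \<Rightarrow> bool" where
  "is_flow act \<longleftrightarrow> continuous_on UNIV (\<lambda>(t, x). act t x)
     \<and> (\<forall>x. act 0 x = x) \<and> (\<forall>s t x. act (s + t) x = act s (act t x))"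

definition orbit :: "('t \<Rightarrow> 'x \<Rightarrow> 'x) \<Rightarrow> 't set \<Rightarrow> 'x \<Rightarrow> 'x set" where
  "orbit act A x = (\<lambda>t. act t x) ` A"

definition subsemigroup :: "'t::group_add set \<Rightarrow> bool" where
  "subsemigroup S \<longleftrightarrow> (\<forall>s\<in>S. \<forall>t\<in>S. s + t \<in> S)"

definition thick :: "'t::topological_group_add set \<Rightarrow> bool" where
  "thick S \<longleftrightarrow> (\<forall>K. compact K \<longrightarrow> (\<exists>t. (\<lambda>k. k + t) ` K \<subseteq> S))"

definition normal_subset :: "'t::group_add set \<Rightarrow> bool" where
  "normal_subset S \<longleftrightarrow> (\<forall>t. (\<lambda>s. s + t) ` S = (\<lambda>s. t + s) ` S)"

definition syndetic :: "'t::topological_group_add set \<Rightarrow> bool" where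
  "syndetic A \<longleftrightarrow> (\<exists>K. compact K \<and> (\<forall>t. (\<lambda>k. k + t) ` K \<inter> A \<noteq> {}))"

definition unif_lyapunov_stable ::
  "('t::topological_group_add \<Rightarrow> 'x::uniform_space \<Rightarrow> 'x) \<Rightarrow> 't set \<Rightarrow> 'x \<Rightarrow> bool" where
  "unif_lyapunov_stable act S x \<longleftrightarrow>
     (\<forall>\<epsilon>. entourage \<epsilon> \<longrightarrow> (\<exists>\<delta>. entourage \<delta> \<and>
        (\<forall>s\<in>S. \<forall>y\<in>orbit act UNIV x. \<forall>z\<in>orbit act UNIV x.
            (y, z) \<in> \<delta> \<longrightarrow> (act s y, act s z) \<in> \<epsilon>)))"

definition invariant :: "('t \<Rightarrow> 'x \<Rightarrow> 'x) \<Rightarrow> 'x set \<Rightarrow> bool" where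
  "invariant act Z \<longleftrightarrow> (\<forall>t. \<forall>z\<in>Z. act t z \<in> Z)"

definition minimal_flow :: "('t \<Rightarrow> 'x::topological_space \<Rightarrow> 'x) \<Rightarrow> 'x set \<Rightarrow> bool" where
  "minimal_flow act Z \<longleftrightarrow> Z \<noteq> {} \<and> invariant act Z \<and>
     (\<forall>A. closedin (top_of_set Z) A \<and> A \<noteq> {} \<and> invariant act A \<longrightarrow> A = Z)"

text \<open>Entourages of the subspace uniformity of Z are the
traces E \<inter> Z\<times>Z of entourages E of X; since A z \<subseteq> Z, the condition
A z \<subseteq> (E \<inter> Z\<times>Z)[z] is the same as A z \<subseteq> E[z].\<close>
definition ap_flow :: "('t::topological_group_add \<Rightarrow> 'x::uniform_space \<Rightarrow> 'x) \<Rightarrow> 'x set \<Rightarrow> bool" where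
  "ap_flow act Z \<longleftrightarrow> invariant act Z \<and>
     (\<forall>\<alpha>. entourage \<alpha> \<longrightarrow> (\<exists>A. syndetic A \<and> (\<forall>z\<in>Z. \<forall>a\<in>A. (z, act a z) \<in> \<alpha>)))"

end

(* Thickness writes every t as (t + a) - a with a, t + a in S.  Pigeonholing the points
   -(a + n(t + a)) x in the compact set cl(S^-1 x) and pushing two nearby ones forward by an
   element of S, which is equicontinuous on Tx, gives Tx \<subseteq> cl(S^-1 x).  So Z = cl(Tx) is
   compact, S is equicontinuous on Z, and every point of Z comes back to x under S: Z is minimal.
   On the compact Z the equicontinuous S is totally bounded for uniform convergence, so for
   u \<in> S some multiple of u is uniformly close to the identity.  This makes -S, and hence
   T = S + (-S), equicontinuous on Z, and a finite uniform net of T yields syndetic sets of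
   almost periods. *)

theory Submission
  imports Defs
begin

lemma entourage_refl: "entourage E \<Longrightarrow> (a, a) \<in> E"
  unfolding entourage_def using uniformity_refl[of "\<lambda>p. p \<in> E"] by simp

lemma entourage_Int: "entourage E \<Longrightarrow> entourage F \<Longrightarrow> entourage (E \<inter> F)"
  unfolding entourage_def by (simp add: eventually_conj)

lemma entourage_converse: "entourage E \<Longrightarrow> entourage (E\<inverse>)"
  unfolding entourage_def converse_def using uniformity_sym[of "\<lambda>p. p \<in> E"]
  by (simp add: case_prod_unfold)

lemma entourage_split:
  assumes "entourage E"
  obtains F where "entourage F" "\<And>a b c. (a, b) \<in> F \<Longrightarrow> (b, c) \<in> F \<Longrightarrow> (a, c) \<in> E"
proof -
  obtain P where "eventually P uniformity" "\<And>a b c. P (a, b) \<Longrightarrow> P (b, c) \<Longrightarrow> (a, c) \<in> E"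
    using uniformity_transE[of "\<lambda>p. p \<in> E"] assms unfolding entourage_def by metis
  then show ?thesis
    using that[of "Collect P"] by (simp add: entourage_def)
qed

lemma entourage_split4:
  assumes "entourage E"
  obtains F where "entourage F" "\<And>a b. (a, b) \<in> F \<Longrightarrow> (b, a) \<in> F"
    "\<And>a b c d e. (a, b) \<in> F \<Longrightarrow> (b, c) \<in> F \<Longrightarrow> (c, d) \<in> F \<Longrightarrow> (d, e) \<in> F \<Longrightarrow> (a, e) \<in> E"
proof -
  obtain F1 where F1: "entourage F1" "\<And>a b c. (a, b) \<in> F1 \<Longrightarrow> (b, c) \<in> F1 \<Longrightarrow> (a, c) \<in> E"
    using entourage_split[OF assms] by blast
  obtain F2 where F2: "entourage F2" "\<And>a b c. (a, b) \<in> F2 \<Longrightarrow> (b, c) \<in> F2 \<Longrightarrow> (a, c) \<in> F1"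
    using entourage_split[OF F1(1)] by blast
  show ?thesis
  proof (rule that[of "F2 \<inter> F2\<inverse>"])
    show "entourage (F2 \<inter> F2\<inverse>)"
      using F2(1) by (simp add: entourage_Int entourage_converse)
    show "(b, a) \<in> F2 \<inter> F2\<inverse>" if "(a, b) \<in> F2 \<inter> F2\<inverse>" for a b
      using that by auto
    fix a b c d e
    assume "(a, b) \<in> F2 \<inter> F2\<inverse>" "(b, c) \<in> F2 \<inter> F2\<inverse>"
      "(c, d) \<in> F2 \<inter> F2\<inverse>" "(d, e) \<in> F2 \<inter> F2\<inverse>"
    then have "(a, c) \<in> F1" "(c, e) \<in> F1"
      using F2(2) by blast+
    then show "(a, e) \<in> E"
      by (rule F1(2))
  qed
qed

lemma eventually_nhds_entourage: "entourage E \<Longrightarrow> eventually (\<lambda>z. (y, z) \<in> E) (nhds y)"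
  unfolding eventually_nhds_uniformity entourage_def by (auto elim: eventually_mono)

lemma closure_eventually_nhds_bex:
  assumes "y \<in> closure A" "eventually P (nhds y)"
  shows "\<exists>a\<in>A. P a"
proof -
  from assms(2) obtain U where "open U" "y \<in> U" "\<forall>z\<in>U. P z"
    unfolding eventually_nhds by blast
  with assms(1) show ?thesis
    unfolding closure_iff_nhds_not_empty by blast
qed

lemma closure_iff_entourage:
  fixes y :: "'a::uniform_space"
  shows "y \<in> closure A \<longleftrightarrow> (\<forall>E. entourage E \<longrightarrow> (\<exists>a\<in>A. (y, a) \<in> E))"
proof (intro iffI allI impI)
  fix E :: "('a \<times> 'a) set" assume "y \<in> closure A" "entourage E"
  then show "\<exists>a\<in>A. (y, a) \<in> E"
    using closure_eventually_nhds_bex eventually_nhds_entourage by blast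
next
  assume near: "\<forall>E. entourage E \<longrightarrow> (\<exists>a\<in>A. (y, a) \<in> E)"
  show "y \<in> closure A"
    unfolding closure_iff_nhds_not_empty
  proof (intro allI impI)
    fix B U assume "U \<subseteq> B" "open U" "y \<in> U"
    then have "entourage {(y', z). y' = y \<longrightarrow> z \<in> U}"
      using eventually_nhds_in_open[of U y]
      unfolding eventually_nhds_uniformity entourage_def by (simp add: case_prod_unfold)
    then obtain a where "a \<in> A" "a \<in> U"
      using near by auto
    with \<open>U \<subseteq> B\<close> show "A \<inter> B \<noteq> {}"
      by blast
  qed
qed

lemma compact_entourage_net:
  assumes "compact K" "entourage E"
  obtains C where "finite C" "C \<subseteq> K" "\<And>z. z \<in> K \<Longrightarrow> \<exists>c\<in>C. (c, z) \<in> E"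
proof -
  have "c \<in> interior {z. (c, z) \<in> E}" for c
  proof -
    obtain U where "open U" "c \<in> U" "\<forall>z\<in>U. (c, z) \<in> E"
      using eventually_nhds_entourage[OF assms(2), of c] unfolding eventually_nhds by blast
    then show ?thesis
      by (intro interiorI[of U]) auto
  qed
  then have "K \<subseteq> (\<Union>c\<in>K. interior {z. (c, z) \<in> E})"
    by (intro subsetI UN_I)
  then obtain C where C: "C \<subseteq> K" "finite C" "K \<subseteq> (\<Union>c\<in>C. interior {z. (c, z) \<in> E})"
    by (rule compactE_image[OF assms(1) open_interior])
  have "\<exists>c\<in>C. (c, z) \<in> E" if "z \<in> K" for z
    using that C(3) interior_subset by blast
  with C(1,2) show ?thesis
    using that by blast
qed

lemma finite_cover_pigeonhole:
  assumes "finite C" "\<And>n::nat. \<exists>c\<in>C. R c (p n)"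
  obtains k l c where "k < l" "c \<in> C" "R c (p k)" "R c (p l)"
proof -
  have "\<forall>n\<in>UNIV. \<exists>c\<in>C. R c (p n)"
    using assms(2) by blast
  from pigeonhole_infinite_rel[OF infinite_UNIV_nat assms(1) this]
  obtain c where c: "c \<in> C" "infinite {n \<in> UNIV. R c (p n)}"
    by blast
  then have unbounded: "\<forall>m. \<exists>n>m. R c (p n)"
    by (simp add: infinite_nat_iff_unbounded)
  then obtain k where "R c (p k)"
    by blast
  moreover obtain l where "k < l" "R c (p l)"
    using unbounded by blast
  ultimately show ?thesis
    using that c(1) by blast
qed

lemma compact_sequence_entourage:
  assumes "compact K" "\<And>n. p n \<in> K" "entourage E"
  obtains k l :: nat where "k < l" "(p k, p l) \<in> E"
proof -
  obtain F where F: "entourage F" "\<And>a b. (a, b) \<in> F \<Longrightarrow> (b, a) \<in> F"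
    "\<And>a b c d e. (a, b) \<in> F \<Longrightarrow> (b, c) \<in> F \<Longrightarrow> (c, d) \<in> F \<Longrightarrow> (d, e) \<in> F \<Longrightarrow> (a, e) \<in> E"
    using entourage_split4[OF assms(3)] by blast
  obtain C where C: "finite C" "C \<subseteq> K" "\<And>z. z \<in> K \<Longrightarrow> \<exists>c\<in>C. (c, z) \<in> F"
    using compact_entourage_net[OF assms(1) F(1)] by blast
  have "\<exists>c\<in>C. (c, p n) \<in> F" for n
    using C(3) assms(2) by blast
  then obtain k l c where kl: "k < l" and "(c, p k) \<in> F" "(c, p l) \<in> F"
    by (rule finite_cover_pigeonhole[OF C(1)])
  then have "(p k, p l) \<in> E"
    using F(3)[OF F(2) _ entourage_refl[OF F(1)] entourage_refl[OF F(1)]] by blast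
  with kl show ?thesis
    by (rule that)
qed

definition uniformly_equicontinuous_on ::
  "'i set \<Rightarrow> ('i \<Rightarrow> 'a::uniform_space \<Rightarrow> 'b::uniform_space) \<Rightarrow> 'a set \<Rightarrow> bool" where
  "uniformly_equicontinuous_on G f Z \<longleftrightarrow>
     (\<forall>E. entourage E \<longrightarrow> (\<exists>D. entourage D \<and>
        (\<forall>g\<in>G. \<forall>y\<in>Z. \<forall>w\<in>Z. (y, w) \<in> D \<longrightarrow> (f g y, f g w) \<in> E)))"

lemma uniformly_equicontinuous_onE:
  assumes "uniformly_equicontinuous_on G f Z" "entourage E"
  obtains D where "entourage D"
    "\<And>g y w. g \<in> G \<Longrightarrow> y \<in> Z \<Longrightarrow> w \<in> Z \<Longrightarrow> (y, w) \<in> D \<Longrightarrow> (f g y, f g w) \<in> E"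
  using assms unfolding uniformly_equicontinuous_on_def by blast

lemma uniformly_equicontinuous_onI:
  assumes "\<And>E. entourage E \<Longrightarrow> \<exists>D. entourage D \<and>
      (\<forall>g\<in>G. \<forall>y\<in>Z. \<forall>w\<in>Z. (y, w) \<in> D \<longrightarrow> (f g y, f g w) \<in> E)"
  shows "uniformly_equicontinuous_on G f Z"
  using assms unfolding uniformly_equicontinuous_on_def by blast

lemma uniformly_equicontinuous_on_insert_id:
  fixes f :: "'i \<Rightarrow> 'a::uniform_space \<Rightarrow> 'a"
  assumes "uniformly_equicontinuous_on G f Z" "\<And>y. f i y = y"
  shows "uniformly_equicontinuous_on (insert i G) f Z"
proof (rule uniformly_equicontinuous_onI)
  fix E :: "('a \<times> 'a) set" assume E: "entourage E"
  obtain D where "entourage D"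
    "\<And>g y w. g \<in> G \<Longrightarrow> y \<in> Z \<Longrightarrow> w \<in> Z \<Longrightarrow> (y, w) \<in> D \<Longrightarrow> (f g y, f g w) \<in> E"
    using uniformly_equicontinuous_onE[OF assms(1) E] by blast
  then show "\<exists>D. entourage D \<and> (\<forall>g\<in>insert i G. \<forall>y\<in>Z. \<forall>w\<in>Z. (y, w) \<in> D \<longrightarrow> (f g y, f g w) \<in> E)"
    using E assms(2) by (intro exI[of _ "D \<inter> E"]) (auto simp: entourage_Int)
qed

lemma uniformly_equicontinuous_on_closure:
  fixes f :: "'i \<Rightarrow> 'a::uniform_space \<Rightarrow> 'b::uniform_space"
  assumes equi: "uniformly_equicontinuous_on G f Z"
    and cont: "\<And>g. g \<in> G \<Longrightarrow> continuous_on UNIV (f g)"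
  shows "uniformly_equicontinuous_on G f (closure Z)"
proof (rule uniformly_equicontinuous_onI)
  fix E :: "('b \<times> 'b) set" assume E: "entourage E"
  obtain F where F: "entourage F" "\<And>a b. (a, b) \<in> F \<Longrightarrow> (b, a) \<in> F"
    "\<And>a b c d e. (a, b) \<in> F \<Longrightarrow> (b, c) \<in> F \<Longrightarrow> (c, d) \<in> F \<Longrightarrow> (d, e) \<in> F \<Longrightarrow> (a, e) \<in> E"
    using entourage_split4[OF E] by blast
  obtain D0 where D0: "entourage D0"
    "\<And>g y w. g \<in> G \<Longrightarrow> y \<in> Z \<Longrightarrow> w \<in> Z \<Longrightarrow> (y, w) \<in> D0 \<Longrightarrow> (f g y, f g w) \<in> F"
    using uniformly_equicontinuous_onE[OF equi F(1)] by blast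
  obtain D where D: "entourage D" "\<And>a b. (a, b) \<in> D \<Longrightarrow> (b, a) \<in> D"
    "\<And>a b c d e. (a, b) \<in> D \<Longrightarrow> (b, c) \<in> D \<Longrightarrow> (c, d) \<in> D \<Longrightarrow> (d, e) \<in> D \<Longrightarrow> (a, e) \<in> D0"
    using entourage_split4[OF D0(1)] by blast
  have approx: "\<exists>y'\<in>Z. (y, y') \<in> D \<and> (f g y, f g y') \<in> F" if "g \<in> G" "y \<in> closure Z" for g y
  proof -
    have "(f g \<longlongrightarrow> f g y) (nhds y)"
      using cont[OF \<open>g \<in> G\<close>] by (simp add: continuous_on_def tendsto_at_iff_tendsto_nhds)
    then have "eventually (\<lambda>z. (f g y, f g z) \<in> F) (nhds y)"
      using eventually_nhds_entourage[OF F(1)] unfolding filterlim_iff by blast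
    then have "eventually (\<lambda>z. (y, z) \<in> D \<and> (f g y, f g z) \<in> F) (nhds y)"
      using eventually_nhds_entourage[OF D(1)] eventually_conj by blast
    then show ?thesis
      using closure_eventually_nhds_bex[OF \<open>y \<in> closure Z\<close>] by blast
  qed
  have "(f g y, f g w) \<in> E"
    if g: "g \<in> G" and "y \<in> closure Z" "w \<in> closure Z" and yw: "(y, w) \<in> D" for g y w
  proof -
    obtain y' where y': "y' \<in> Z" "(y, y') \<in> D" "(f g y, f g y') \<in> F"
      using approx[OF g \<open>y \<in> closure Z\<close>] by blast
    obtain w' where w': "w' \<in> Z" "(w, w') \<in> D" "(f g w, f g w') \<in> F"
      using approx[OF g \<open>w \<in> closure Z\<close>] by blast
    have "(y', w') \<in> D0"
      using D(3)[OF D(2)[OF y'(2)] yw w'(2) entourage_refl[OF D(1)]] .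
    then have "(f g y', f g w') \<in> F"
      by (rule D0(2)[OF g y'(1) w'(1)])
    then show ?thesis
      using F(3)[OF y'(3) _ F(2)[OF w'(3)] entourage_refl[OF F(1)]] by blast
  qed
  then show "\<exists>D. entourage D \<and>
      (\<forall>g\<in>G. \<forall>y\<in>closure Z. \<forall>w\<in>closure Z. (y, w) \<in> D \<longrightarrow> (f g y, f g w) \<in> E)"
    using D(1) by blast
qed

text \<open>Arzel\<agrave>-Ascoli type finiteness: the maps are classified by which points of a finite
  net of L lie near their values on a finite net of Z; maps in one class are uniformly close.\<close>

lemma uniformly_equicontinuous_on_finite_net:
  fixes f :: "'i \<Rightarrow> 'a::uniform_space \<Rightarrow> 'b::uniform_space"
  assumes equi: "uniformly_equicontinuous_on G f Z" and "compact Z" "compact L"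
    and into: "\<And>g z. g \<in> G \<Longrightarrow> z \<in> Z \<Longrightarrow> f g z \<in> L" and "entourage \<beta>"
  obtains H where "finite H" "H \<subseteq> G" "\<And>g. g \<in> G \<Longrightarrow> \<exists>h\<in>H. \<forall>z\<in>Z. (f g z, f h z) \<in> \<beta>"
proof -
  obtain B where B: "entourage B" "\<And>a b. (a, b) \<in> B \<Longrightarrow> (b, a) \<in> B"
    "\<And>a b c d e. (a, b) \<in> B \<Longrightarrow> (b, c) \<in> B \<Longrightarrow> (c, d) \<in> B \<Longrightarrow> (d, e) \<in> B \<Longrightarrow> (a, e) \<in> \<beta>"
    using entourage_split4[OF \<open>entourage \<beta>\<close>] by blast
  obtain D where D: "entourage D"
    "\<And>g y w. g \<in> G \<Longrightarrow> y \<in> Z \<Longrightarrow> w \<in> Z \<Longrightarrow> (y, w) \<in> D \<Longrightarrow> (f g y, f g w) \<in> B"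
    using uniformly_equicontinuous_onE[OF equi B(1)] by blast
  obtain C where C: "finite C" "C \<subseteq> Z" "\<And>z. z \<in> Z \<Longrightarrow> \<exists>c\<in>C. (c, z) \<in> D"
    using compact_entourage_net[OF \<open>compact Z\<close> D(1)] by blast
  obtain N where N: "finite N" "N \<subseteq> L" "\<And>v. v \<in> L \<Longrightarrow> \<exists>d\<in>N. (d, v) \<in> B"
    using compact_entourage_net[OF \<open>compact L\<close> B(1)] by blast
  define P where "P g = {(c, d) \<in> C \<times> N. (d, f g c) \<in> B}" for g
  define H where "H = inv_into G P ` P ` G"
  have "finite (P ` G)"
    by (rule finite_subset[of _ "Pow (C \<times> N)"]) (auto simp: P_def C(1) N(1))
  then have "finite H"
    by (simp add: H_def)
  moreover have "H \<subseteq> G"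
    by (auto simp: H_def inv_into_into)
  moreover have "\<exists>h\<in>H. \<forall>z\<in>Z. (f g z, f h z) \<in> \<beta>" if g: "g \<in> G" for g
  proof (intro bexI ballI)
    let ?h = "inv_into G P (P g)"
    show "?h \<in> H"
      using g by (simp add: H_def)
    have h: "?h \<in> G" "P ?h = P g"
      using g by (auto simp: inv_into_into f_inv_into_f)
    fix z assume "z \<in> Z"
    then obtain c where c: "c \<in> C" "(c, z) \<in> D"
      using C(3) by blast
    have "c \<in> Z"
      using c(1) C(2) by blast
    then obtain d where d: "d \<in> N" "(d, f g c) \<in> B"
      using N(3) into[OF g] by blast
    then have "(c, d) \<in> P ?h"
      using c(1) h(2) by (simp add: P_def)
    then have "(d, f ?h c) \<in> B"
      by (simp add: P_def)
    then show "(f g z, f ?h z) \<in> \<beta>"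
      by (rule B(3)[OF B(2)[OF D(2)[OF g \<open>c \<in> Z\<close> \<open>z \<in> Z\<close> c(2)]] B(2)[OF d(2)] _
            D(2)[OF h(1) \<open>c \<in> Z\<close> \<open>z \<in> Z\<close> c(2)]])
  qed
  ultimately show ?thesis
    using that by blast
qed

lemma subsemigroup_sum_list:
  assumes "subsemigroup S" "set xs \<subseteq> S" "xs \<noteq> []"
  shows "sum_list xs \<in> S"
  using assms(2,3)
proof (induction xs)
  case (Cons a xs)
  then show ?case
    using assms(1) by (cases xs) (auto simp: subsemigroup_def)
qed simp

lemma thick_translateE:
  assumes "thick S"
  obtains a where "a \<in> S" "t + a \<in> S"
proof -
  have "compact {0, t}"
    by simp
  then obtain a where "(\<lambda>k. k + a) ` {0, t} \<subseteq> S"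
    using assms unfolding thick_def by blast
  then have "a \<in> S" "t + a \<in> S"
    by auto
  then show ?thesis
    by (rule that)
qed

lemma thick_plus_uminus_eq_UNIV:
  assumes "thick S"
  shows "{a + b | a b. a \<in> S \<and> b \<in> uminus ` S} = UNIV"
proof -
  have "t \<in> {a + b | a b. a \<in> S \<and> b \<in> uminus ` S}" for t
  proof -
    obtain a where "a \<in> S" "t + a \<in> S"
      using thick_translateE[OF assms] by blast
    moreover have "t = (t + a) + - a"
      by (simp add: add.assoc)
    ultimately show ?thesis
      by blast
  qed
  then show ?thesis
    by blast
qed

lemma orbit_mono: "A \<subseteq> B \<Longrightarrow> orbit act A x \<subseteq> orbit act B x"
  by (simp add: orbit_def image_mono)

locale flow =
  fixes act :: "'t::topological_group_add \<Rightarrow> 'x::uniform_space \<Rightarrow> 'x"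
  assumes is_flow: "is_flow act"
begin

lemma act_add: "act (s + t) y = act s (act t y)"
  using is_flow unfolding is_flow_def by blast

lemma act_zero [simp]: "act 0 y = y"
  using is_flow unfolding is_flow_def by blast

lemma act_minus_cancel [simp]: "act (-t) (act t y) = y" "act t (act (-t) y) = y"
  by (metis act_zero act_add add.left_inverse) (metis act_zero act_add add.right_inverse)

lemma continuous_on_act: "continuous_on UNIV (act t)"
proof -
  have "continuous_on UNIV ((\<lambda>(t, x). act t x) \<circ> Pair t)"
    using is_flow unfolding is_flow_def
    by (intro continuous_on_compose continuous_intros) (auto elim: continuous_on_subset)
  then show ?thesis
    by (simp add: o_def)
qed

lemma invariant_closure_orbit: "invariant act (closure (orbit act UNIV x))"
  unfolding invariant_def
proof (intro allI ballI)
  fix t z assume "z \<in> closure (orbit act UNIV x)"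
  moreover have "act t ` closure (orbit act UNIV x) \<subseteq> closure (orbit act UNIV x)"
  proof (rule image_closure_subset)
    show "continuous_on (closure (orbit act UNIV x)) (act t)"
      using continuous_on_act continuous_on_subset by blast
    show "act t ` orbit act UNIV x \<subseteq> closure (orbit act UNIV x)"
      using closure_subset by (fastforce simp: orbit_def act_add[symmetric])
  qed simp
  ultimately show "act t z \<in> closure (orbit act UNIV x)"
    by blast
qed

lemma minimal_flow_closure_orbit:
  assumes "\<And>z. z \<in> closure (orbit act UNIV x) \<Longrightarrow> x \<in> closure (orbit act UNIV z)"
  shows "minimal_flow act (closure (orbit act UNIV x))"
  unfolding minimal_flow_def
proof (intro conjI allI impI)
  show "closure (orbit act UNIV x) \<noteq> {}"
    using closure_subset by (fastforce simp: orbit_def)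
  show "invariant act (closure (orbit act UNIV x))"
    by (rule invariant_closure_orbit)
  fix A assume A: "closedin (top_of_set (closure (orbit act UNIV x))) A \<and> A \<noteq> {} \<and> invariant act A"
  then have sub: "A \<subseteq> closure (orbit act UNIV x)" and "closed A"
    using closedin_imp_subset closedin_closed_trans by blast+
  obtain z where "z \<in> A"
    using A by blast
  have orbit_in_A: "orbit act UNIV y \<subseteq> A" if "y \<in> A" for y
    using A that by (auto simp: orbit_def invariant_def)
  then have "x \<in> A"
    using assms[of z] sub \<open>z \<in> A\<close> \<open>closed A\<close> closure_minimal by blast
  then have "closure (orbit act UNIV x) \<subseteq> A"
    using orbit_in_A \<open>closed A\<close> closure_minimal by blast
  then show "A = closure (orbit act UNIV x)"
    using sub by blast
qed

lemma orbit_subset_closure_minus_orbit: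
  assumes "subsemigroup S" "thick S"
    and compact: "compact (closure (orbit act (uminus ` S) x))"
    and equi: "uniformly_equicontinuous_on S act (orbit act UNIV x)"
  shows "orbit act UNIV x \<subseteq> closure (orbit act (uminus ` S) x)"
proof
  fix y assume "y \<in> orbit act UNIV x"
  then obtain t where y: "y = act t x"
    by (auto simp: orbit_def)
  obtain a where a: "a \<in> S" "t + a \<in> S"
    using thick_translateE[OF \<open>thick S\<close>] by blast
  define h where "h = t + a"
  have sum_in_S: "a + sum_list (replicate n h) \<in> S" for n
    using subsemigroup_sum_list[OF \<open>subsemigroup S\<close>, of "a # replicate n h"] a
    by (force simp: h_def set_replicate_conv_if)
  define p where "p n = act (- (a + sum_list (replicate n h))) x" for n
  have p_orbit: "p n \<in> orbit act (uminus ` S) x" for n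
    using sum_in_S by (auto simp: p_def orbit_def)
  show "y \<in> closure (orbit act (uminus ` S) x)"
    unfolding closure_iff_entourage
  proof (intro allI impI)
    fix E :: "('x \<times> 'x) set" assume E: "entourage E"
    obtain D where D: "entourage D"
      "\<And>s y w. s \<in> S \<Longrightarrow> y \<in> orbit act UNIV x \<Longrightarrow> w \<in> orbit act UNIV x \<Longrightarrow> (y, w) \<in> D
        \<Longrightarrow> (act s y, act s w) \<in> E"
      using uniformly_equicontinuous_onE[OF equi E] by blast
    obtain k l where kl: "k < l" "(p k, p l) \<in> D"
      using compact_sequence_entourage[OF compact _ D(1), of p] p_orbit closure_subset by blast
    define s where "s = sum_list (replicate (Suc k) h)"
    define u where "u = a + sum_list (replicate (l - Suc k) h)"
    have "s \<in> S"
      using subsemigroup_sum_list[OF \<open>subsemigroup S\<close>, of "replicate (Suc k) h"] a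
      by (simp add: s_def h_def set_replicate_conv_if)
    have "act s (p k) = y"
    proof -
      have "s + - (a + sum_list (replicate k h)) = t"
        by (simp add: s_def h_def add.assoc minus_add del: add_uminus_conv_diff)
      then show ?thesis
        by (simp add: p_def y flip: act_add)
    qed
    moreover have "act s (p l) = act (- u) x"
    proof -
      have "l = (l - Suc k) + Suc k"
        using kl(1) by simp
      then have "replicate l h = replicate (l - Suc k) h @ replicate (Suc k) h"
        by (metis replicate_add)
      then have "s + - (a + sum_list (replicate l h)) = - u"
        by (simp add: s_def u_def add.assoc minus_add del: add_uminus_conv_diff)
      then show ?thesis
        by (simp add: p_def flip: act_add)
    qed
    moreover have "(act s (p k), act s (p l)) \<in> E"
      using D(2)[OF \<open>s \<in> S\<close> _ _ kl(2)] by (simp add: p_def orbit_def)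
    moreover have "act (- u) x \<in> orbit act (uminus ` S) x"
      using sum_in_S by (simp add: u_def orbit_def)
    ultimately show "\<exists>b\<in>orbit act (uminus ` S) x. (y, b) \<in> E"
      by metis
  qed
qed

lemma closure_orbit_eq_closure_minus_orbit:
  assumes "subsemigroup S" "thick S"
    and "compact (closure (orbit act (uminus ` S) x))"
    and "uniformly_equicontinuous_on S act (orbit act UNIV x)"
  shows "closure (orbit act UNIV x) = closure (orbit act (uminus ` S) x)"
proof
  show "closure (orbit act UNIV x) \<subseteq> closure (orbit act (uminus ` S) x)"
    by (rule closure_minimal[OF orbit_subset_closure_minus_orbit[OF assms]]) simp
  show "closure (orbit act (uminus ` S) x) \<subseteq> closure (orbit act UNIV x)"
    by (rule closure_mono[OF orbit_mono]) simp
qed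

lemma base_point_in_closure_orbit:
  assumes equi: "uniformly_equicontinuous_on S act Z"
    and sub: "orbit act (uminus ` S) x \<subseteq> Z"
    and z: "z \<in> Z" "z \<in> closure (orbit act (uminus ` S) x)"
  shows "x \<in> closure (orbit act S z)"
  unfolding closure_iff_entourage
proof (intro allI impI)
  fix E :: "('x \<times> 'x) set" assume E: "entourage E"
  obtain D where D: "entourage D"
    "\<And>s y w. s \<in> S \<Longrightarrow> y \<in> Z \<Longrightarrow> w \<in> Z \<Longrightarrow> (y, w) \<in> D \<Longrightarrow> (act s y, act s w) \<in> E"
    using uniformly_equicontinuous_onE[OF equi E] by blast
  obtain b where b: "b \<in> orbit act (uminus ` S) x" "(z, b) \<in> D\<inverse>"
    using z(2) entourage_converse[OF D(1)] unfolding closure_iff_entourage by blast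
  then obtain u where u: "u \<in> S" "b = act (- u) x"
    by (auto simp: orbit_def)
  have "(act u b, act u z) \<in> E"
    using D(2)[OF u(1) _ z(1)] sub b by blast
  then have "(x, act u z) \<in> E"
    using u(2) by simp
  moreover have "act u z \<in> orbit act S z"
    using u(1) by (simp add: orbit_def)
  ultimately show "\<exists>a\<in>orbit act S z. (x, a) \<in> E"
    by blast
qed

text \<open>Two multiples \<open>(k + 1) u\<close> and \<open>(l + 1) u\<close> are uniformly close to the same
  element of a finite net, so \<open>(l - k) u = s + u\<close> moves no point of \<open>Z\<close> far.\<close>

lemma uniformly_close_to_identity:
  assumes "subsemigroup S" "compact Z" "invariant act Z"
    and equi: "uniformly_equicontinuous_on S act Z" and "u \<in> S" "entourage \<beta>"
  obtains s where "s \<in> insert 0 S" "\<And>z. z \<in> Z \<Longrightarrow> (z, act (s + u) z) \<in> \<beta>"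
proof -
  obtain B where B: "entourage B" "\<And>a b. (a, b) \<in> B \<Longrightarrow> (b, a) \<in> B"
    "\<And>a b c d e. (a, b) \<in> B \<Longrightarrow> (b, c) \<in> B \<Longrightarrow> (c, d) \<in> B \<Longrightarrow> (d, e) \<in> B \<Longrightarrow> (a, e) \<in> \<beta>"
    using entourage_split4[OF \<open>entourage \<beta>\<close>] by blast
  have into: "act t z \<in> Z" if "z \<in> Z" for t z
    using assms(3) that by (simp add: invariant_def)
  obtain H where H: "finite H" "H \<subseteq> S" "\<And>g. g \<in> S \<Longrightarrow> \<exists>h\<in>H. \<forall>z\<in>Z. (act g z, act h z) \<in> B"
    using uniformly_equicontinuous_on_finite_net[OF equi \<open>compact Z\<close> \<open>compact Z\<close> into B(1)] by blast
  define g where "g k = sum_list (replicate (Suc k) u)" for k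
  have "g k \<in> S" for k
    using subsemigroup_sum_list[OF \<open>subsemigroup S\<close>, of "replicate (Suc k) u"] \<open>u \<in> S\<close>
    by (simp add: g_def set_replicate_conv_if)
  then have "\<exists>h\<in>H. \<forall>z\<in>Z. (act (g k) z, act h z) \<in> B" for k
    using H(3) by blast
  then obtain k l h where kl: "k < l"
    and hk: "\<forall>z\<in>Z. (act (g k) z, act h z) \<in> B" and hl: "\<forall>z\<in>Z. (act (g l) z, act h z) \<in> B"
    by (rule finite_cover_pigeonhole[OF H(1)])
  define s where "s = sum_list (replicate (l - Suc k) u)"
  have "s \<in> insert 0 S"
    using subsemigroup_sum_list[OF \<open>subsemigroup S\<close>, of "replicate (l - Suc k) u"] \<open>u \<in> S\<close>
    by (cases "l - Suc k") (simp_all add: s_def set_replicate_conv_if)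
  have g_l: "g l = s + u + g k"
  proof -
    have "Suc l = (l - Suc k) + Suc (Suc k)"
      using kl by simp
    then have "replicate (Suc l) u = replicate (l - Suc k) u @ u # replicate (Suc k) u"
      by (metis replicate_add replicate_Suc)
    then show ?thesis
      by (simp add: g_def s_def add.assoc)
  qed
  show thesis
  proof (rule that[OF \<open>s \<in> insert 0 S\<close>])
    fix z assume "z \<in> Z"
    define w where "w = act (- g k) z"
    have "w \<in> Z"
      using into[OF \<open>z \<in> Z\<close>] by (simp add: w_def)
    have "(act (g k) w, act (g l) w) \<in> \<beta>"
      using B(3)[OF _ B(2) entourage_refl[OF B(1)] entourage_refl[OF B(1)]] hk hl \<open>w \<in> Z\<close> by blast
    moreover have "act (g k) w = z" "act (g l) w = act (s + u) z"
      by (simp_all add: w_def g_l act_add)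
    ultimately show "(z, act (s + u) z) \<in> \<beta>"
      by simp
  qed
qed

lemma uniformly_equicontinuous_on_uminus:
  assumes "subsemigroup S" "compact Z" "invariant act Z"
    and equi: "uniformly_equicontinuous_on S act Z"
  shows "uniformly_equicontinuous_on (uminus ` S) act Z"
proof (rule uniformly_equicontinuous_onI)
  fix E :: "('x \<times> 'x) set" assume E: "entourage E"
  obtain B where B: "entourage B" "\<And>a b. (a, b) \<in> B \<Longrightarrow> (b, a) \<in> B"
    "\<And>a b c d e. (a, b) \<in> B \<Longrightarrow> (b, c) \<in> B \<Longrightarrow> (c, d) \<in> B \<Longrightarrow> (d, e) \<in> B \<Longrightarrow> (a, e) \<in> E"
    using entourage_split4[OF E] by blast
  obtain D where D: "entourage D"
    "\<And>s y w. s \<in> insert 0 S \<Longrightarrow> y \<in> Z \<Longrightarrow> w \<in> Z \<Longrightarrow> (y, w) \<in> D \<Longrightarrow> (act s y, act s w) \<in> B"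
    using uniformly_equicontinuous_onE[OF uniformly_equicontinuous_on_insert_id[OF equi act_zero] B(1)]
    by blast
  have "(act (- u) y, act (- u) w) \<in> E"
    if u: "u \<in> S" and y: "y \<in> Z" and w: "w \<in> Z" and yw: "(y, w) \<in> D" for u y w
  proof -
    obtain s where s: "s \<in> insert 0 S" "\<And>z. z \<in> Z \<Longrightarrow> (z, act (s + u) z) \<in> B"
      using uniformly_close_to_identity[OF assms(1-4) u B(1)] by blast
    have into: "act (- u) v \<in> Z" if "v \<in> Z" for v
      using assms(3) that by (simp add: invariant_def)
    have "(act (- u) y, act s y) \<in> B"
      using s(2)[OF into[OF y]] by (simp add: act_add)
    moreover have "(act s y, act s w) \<in> B"
      by (rule D(2)[OF s(1) y w yw])
    moreover have "(act s w, act (- u) w) \<in> B"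
      using B(2)[OF s(2)[OF into[OF w]]] by (simp add: act_add)
    ultimately show ?thesis
      using B(3)[OF _ _ _ entourage_refl[OF B(1)]] by blast
  qed
  then show "\<exists>D. entourage D \<and>
      (\<forall>g\<in>uminus ` S. \<forall>y\<in>Z. \<forall>w\<in>Z. (y, w) \<in> D \<longrightarrow> (act g y, act g w) \<in> E)"
    using D(1) by blast
qed

lemma uniformly_equicontinuous_on_plus:
  assumes equi_A: "uniformly_equicontinuous_on A act Z"
    and equi_B: "uniformly_equicontinuous_on B act Z" and "invariant act Z"
  shows "uniformly_equicontinuous_on {a + b | a b. a \<in> A \<and> b \<in> B} act Z"
proof (rule uniformly_equicontinuous_onI)
  fix E :: "('x \<times> 'x) set" assume E: "entourage E"
  obtain D1 where D1: "entourage D1"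
    "\<And>a y w. a \<in> A \<Longrightarrow> y \<in> Z \<Longrightarrow> w \<in> Z \<Longrightarrow> (y, w) \<in> D1 \<Longrightarrow> (act a y, act a w) \<in> E"
    using uniformly_equicontinuous_onE[OF equi_A E] by blast
  obtain D2 where D2: "entourage D2"
    "\<And>b y w. b \<in> B \<Longrightarrow> y \<in> Z \<Longrightarrow> w \<in> Z \<Longrightarrow> (y, w) \<in> D2 \<Longrightarrow> (act b y, act b w) \<in> D1"
    using uniformly_equicontinuous_onE[OF equi_B D1(1)] by blast
  have "(act (a + b) y, act (a + b) w) \<in> E"
    if "a \<in> A" "b \<in> B" "y \<in> Z" "w \<in> Z" "(y, w) \<in> D2" for a b y w
    using D1(2)[OF \<open>a \<in> A\<close> _ _ D2(2)[OF that(2-5)]] \<open>invariant act Z\<close> that(3,4)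
    by (simp add: act_add invariant_def)
  then show "\<exists>D. entourage D \<and> (\<forall>g\<in>{a + b | a b. a \<in> A \<and> b \<in> B}.
      \<forall>y\<in>Z. \<forall>w\<in>Z. (y, w) \<in> D \<longrightarrow> (act g y, act g w) \<in> E)"
    using D2(1) by blast
qed

lemma ap_flow_if_uniformly_equicontinuous:
  assumes "compact Z" "invariant act Z" and equi: "uniformly_equicontinuous_on UNIV act Z"
  shows "ap_flow act Z"
  unfolding ap_flow_def
proof (intro conjI allI impI)
  show "invariant act Z"
    by fact
  fix \<alpha> :: "('x \<times> 'x) set" assume "entourage \<alpha>"
  obtain D where D: "entourage D"
    "\<And>t y w. t \<in> UNIV \<Longrightarrow> y \<in> Z \<Longrightarrow> w \<in> Z \<Longrightarrow> (y, w) \<in> D \<Longrightarrow> (act t y, act t w) \<in> \<alpha>"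
    using uniformly_equicontinuous_onE[OF equi \<open>entourage \<alpha>\<close>] by blast
  have into: "act t z \<in> Z" if "z \<in> Z" for t z
    using assms(2) that by (simp add: invariant_def)
  obtain H where H: "finite H" "H \<subseteq> UNIV" "\<And>t. t \<in> UNIV \<Longrightarrow> \<exists>h\<in>H. \<forall>z\<in>Z. (act t z, act h z) \<in> D\<inverse>"
    using uniformly_equicontinuous_on_finite_net[OF equi assms(1) assms(1) into entourage_converse[OF D(1)]]
    by blast
  define A where "A = {r. \<forall>z\<in>Z. (z, act r z) \<in> \<alpha>}"
  have "(\<lambda>k. k + t) ` uminus ` H \<inter> A \<noteq> {}" for t
  proof -
    obtain h where h: "h \<in> H" "\<forall>z\<in>Z. (act h z, act t z) \<in> D"
      using H(3)[of t] by auto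
    then have "\<forall>z\<in>Z. (act (- h) (act h z), act (- h) (act t z)) \<in> \<alpha>"
      using D(2) into by blast
    then have "- h + t \<in> A"
      by (simp add: A_def act_add)
    moreover have "- h + t \<in> (\<lambda>k. k + t) ` uminus ` H"
      using h(1) by blast
    ultimately show ?thesis
      by blast
  qed
  moreover have "compact (uminus ` H)"
    using H(1) by (simp add: finite_imp_compact)
  ultimately have "syndetic A"
    unfolding syndetic_def by blast
  then show "\<exists>A. syndetic A \<and> (\<forall>z\<in>Z. \<forall>a\<in>A. (z, act a z) \<in> \<alpha>)"
    by (auto simp: A_def)
qed

end

theorem corollary2:
  fixes act :: "'t::{topological_group_add, t2_space} \<Rightarrow> 'x::{uniform_space, t2_space} \<Rightarrow> 'x"
    and S :: "'t set" and x :: 'x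
  assumes "is_flow act"
    and "subsemigroup S" and "thick S" and "normal_subset S"
    and "compact (closure (orbit act (uminus ` S) x))"
    and "unif_lyapunov_stable act S x"
  shows "compact (closure (orbit act UNIV x))
         \<and> minimal_flow act (closure (orbit act UNIV x))
         \<and> ap_flow act (closure (orbit act UNIV x))"
proof -
  interpret flow act
    using assms(1) by unfold_locales
  let ?Z = "closure (orbit act UNIV x)"
  have equi_orbit: "uniformly_equicontinuous_on S act (orbit act UNIV x)"
    using assms(6) by (simp add: unif_lyapunov_stable_def uniformly_equicontinuous_on_def)
  have Z_eq: "?Z = closure (orbit act (uminus ` S) x)"
    by (rule closure_orbit_eq_closure_minus_orbit[OF assms(2,3,5) equi_orbit])
  have sub: "orbit act (uminus ` S) x \<subseteq> ?Z"
    using orbit_mono[OF subset_UNIV, of act "uminus ` S" x] closure_subset by blast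
  have compact: "compact ?Z"
    using assms(5) Z_eq by simp
  have inv: "invariant act ?Z"
    by (rule invariant_closure_orbit)
  have equi: "uniformly_equicontinuous_on S act ?Z"
    using uniformly_equicontinuous_on_closure[OF equi_orbit continuous_on_act] .
  have "minimal_flow act ?Z"
  proof (rule minimal_flow_closure_orbit)
    fix z assume "z \<in> ?Z"
    then have "x \<in> closure (orbit act S z)"
      using base_point_in_closure_orbit[OF equi sub] Z_eq by blast
    then show "x \<in> closure (orbit act UNIV z)"
      using closure_mono[OF orbit_mono[OF subset_UNIV]] by blast
  qed
  moreover have "uniformly_equicontinuous_on UNIV act ?Z"
    using uniformly_equicontinuous_on_plus[OF equi uniformly_equicontinuous_on_uminus[OF assms(2) compact inv equi] inv]
    by (simp add: thick_plus_uminus_eq_UNIV[OF assms(3)])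
  then have "ap_flow act ?Z"
    by (rule ap_flow_if_uniformly_equicontinuous[OF compact inv])
  ultimately show ?thesis
    using compact by blast
qed

end
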